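(* Let $\mathcal G$ be an undirected connected graph on the agent set $\mathcal V=\{1,\dots,N\}$ with symmetric nonnegative weights $a_{ij}=a_{ji}$, where $a_{ij}>0$ if and only if $j\in\mathcal N_i$ (the neighbor set of $i$), and let $L$ be its weighted Laplacian ($l_{ij}=-a_{ij}$ for $i\ne j$, $l_{ii}=\sum_{j\ne i}a_{ij}$), with $\lambda_2>0$ its smallest nonzero eigenvalue. Fix a common amplitude $A_{\rm m}>0$ and, for each ordered pair $(i,j)$ with $j\in\mathcal N_i$, a constant frequency $\omega_{ij}$ (chosen at random by agent $i$), and set $s_{ij}(t)=A_{\rm m}\sin(\omega_{ij}t)$. Each agent forms the masking signal $m_i(t)=\sum_{j\in\mathcal N_i}\big(s_{ji}(t)-s_{ij}(t)\big)$ and the masked reference $z_{{\rm m},i}(t)=z_i(t)+m_i(t)$, where $z_i:[0,\infty)\to\mathbb R$ is its continuously differentiable reference signal with bounded derivative $\dot z_i$. For a gain $\beta>0$, each agent runs $$\dot{\hat z}_{{\rm a},i}(t)=\dot z_{{\rm m},i}(t)-\beta\sum_{j=1}^N a_{ij}\big(\hat z_{{\rm a},i}(t)-\hat z_{{\rm a},j}(t)\big),\qquad \hat z_{{\rm a},i}(0)=z_i(0)+m_i(0).$$ Then each estimate $\hat z_{{\rm a},i}(t)$ tracks the true average $\frac1N\mathbf 1_N^{\rm T}z(t)$, where $z(t)=[z_1(t)\,\cdots\,z_N(t)]^{\rm T}$, with a bounded steady-state deviation that decreases as $\beta$ increases; precisely, there is a constant $c\ge 0$ depending on the reference signals, the masking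 signals and the graph but not on $\beta$, such that for every $\beta>0$ and every $i\in\mathcal V$, $$\limsup_{t\to\infty}\Big|\hat z_{{\rm a},i}(t)-\tfrac1N\mathbf 1_N^{\rm T}z(t)\Big|\le \frac{c}{\beta}.$$
   Context: $\mathbf 1_N$ denotes the all-ones vector in $\mathbb R^N$. The signal $s_{ij}$ is generated by agent $i$ and sent to neighbor $j$; hence $m_i$ uses the signals $s_{ji}$ received from neighbors and the signals $s_{ij}$ sent to them. *)

theory Defs
  imports "HOL-Analysis.Analysis"
begin

text \<open>Agents are indexed by 0..N-1 (the paper's 1..N). Weights a i j.\<close>

definition nbrs :: "nat \<Rightarrow> (nat \<Rightarrow> nat \<Rightarrow> real) \<Rightarrow> nat \<Rightarrow> nat set" where
  "nbrs N a i = {j. j < N \<and> a i j > 0}"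

definition graph_edges :: "nat \<Rightarrow> (nat \<Rightarrow> nat \<Rightarrow> real) \<Rightarrow> (nat \<times> nat) set" where
  "graph_edges N a = {(i, j). i < N \<and> j < N \<and> a i j > 0}"

definition connected_graph :: "nat \<Rightarrow> (nat \<Rightarrow> nat \<Rightarrow> real) \<Rightarrow> bool" where
  "connected_graph N a \<longleftrightarrow> (\<forall>i<N. \<forall>j<N. (i, j) \<in> (graph_edges N a)\<^sup>*)"

definition laplacian :: "nat \<Rightarrow> (nat \<Rightarrow> nat \<Rightarrow> real) \<Rightarrow> nat \<Rightarrow> nat \<Rightarrow> real" where
  "laplacian N a i j = (if i = j then (\<Sum>k\<in>{k. k < N \<and> k \<noteq> i}. a i k) else - a i j)"

definition sig :: "real \<Rightarrow> (nat \<Rightarrow> nat \<Rightarrow> real) \<Rightarrow> nat \<Rightarrow> nat \<Rightarrow> real \<Rightarrow> real" where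
  "sig Am \<omega> i j t = Am * sin (\<omega> i j * t)"

definition mask :: "nat \<Rightarrow> (nat \<Rightarrow> nat \<Rightarrow> real) \<Rightarrow> real \<Rightarrow> (nat \<Rightarrow> nat \<Rightarrow> real) \<Rightarrow> nat \<Rightarrow> real \<Rightarrow> real" where
  "mask N a Am \<omega> i t = (\<Sum>j\<in>nbrs N a i. sig Am \<omega> j i t - sig Am \<omega> i j t)"

end

theory Submission
  imports Defs "HOL-Real_Asymp.Real_Asymp"
begin

(* Every signal s_ij enters the mask of i with a minus sign and that of j with a plus sign, and
   the Laplacian coupling does not change the sum of the states; hence the estimates always sum
   to the sum of the references, and the errors e_i = zh_i - (1/N) sum_j z_j sum to zero.
   On such vectors a connected Laplacian is coercive, e^T L e >= l |e|^2 with l > 0 (derived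
   from path bounds rather than from eigenvalues).  Therefore V = |e|^2 obeys
   V' <= 2 e.u - 2 beta l V <= |u|^2 / (beta l) - beta l V for the bounded input
   u_i = z'_i + m'_i - (1/N) sum_j z'_j, and comparison with the linear equation gives
   limsup |e_i| <= |u| / (l beta), with |u| bounded independently of beta. *)

lemma nonpos_deriv_imp_le_initial:
  fixes f f' :: "real \<Rightarrow> real"
  assumes deriv: "\<And>t. t \<ge> a \<Longrightarrow> (f has_real_derivative f' t) (at t within {a..})"
    and nonpos: "\<And>t. t \<ge> a \<Longrightarrow> f' t \<le> 0" and "t \<ge> a"
  shows "f t \<le> f a"
proof (rule DERIV_nonpos_imp_decreasing_open[OF \<open>t \<ge> a\<close>])
  fix x assume x: "a < x" "x < t"
  then have "at x within {a..} = at x"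
    by (intro at_within_interior) auto
  then show "\<exists>y. (f has_real_derivative y) (at x) \<and> y \<le> 0"
    using deriv[of x] nonpos[of x] x by auto
next
  have "continuous_on {a..} f"
    unfolding continuous_on_eq_continuous_within using deriv by (auto intro: DERIV_continuous)
  then show "continuous_on {a..t} f"
    by (rule continuous_on_subset) auto
qed

lemma differential_inequality_exp_bound:
  fixes f f' :: "real \<Rightarrow> real"
  assumes deriv: "\<And>t. t \<ge> 0 \<Longrightarrow> (f has_real_derivative f' t) (at t within {0..})"
    and ineq: "\<And>t. t \<ge> 0 \<Longrightarrow> f' t \<le> k * (R - f t)" and "t \<ge> 0"
  shows "f t \<le> R + exp (- (k * t)) * (f 0 - R)"
proof -
  define \<phi> where "\<phi> t = exp (k * t) * (f t - R)" for t
  have \<phi>_deriv: "(\<phi> has_real_derivative exp (k * s) * (f' s - k * (R - f s))) (at s within {0..})"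
    if "s \<ge> 0" for s
    unfolding \<phi>_def using deriv[OF that]
    by (auto intro!: derivative_eq_intros simp: algebra_simps)
  have "exp (k * s) * (f' s - k * (R - f s)) \<le> 0" if "s \<ge> 0" for s
    using ineq[OF that] by (simp add: mult_nonneg_nonpos)
  then have "\<phi> t \<le> \<phi> 0"
    using nonpos_deriv_imp_le_initial[OF \<phi>_deriv] \<open>t \<ge> 0\<close> by blast
  have "f t - R = exp (- (k * t)) * \<phi> t"
    unfolding \<phi>_def by (simp add: exp_minus)
  also have "\<dots> \<le> exp (- (k * t)) * (f 0 - R)"
    using \<open>\<phi> t \<le> \<phi> 0\<close> unfolding \<phi>_def by simp
  finally show ?thesis by simp
qed

lemma Limsup_abs_le_sqrt_of_differential_inequality:
  fixes f f' g :: "real \<Rightarrow> real"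
  assumes deriv: "\<And>t. t \<ge> 0 \<Longrightarrow> (f has_real_derivative f' t) (at t within {0..})"
    and ineq: "\<And>t. t \<ge> 0 \<Longrightarrow> f' t \<le> k * (R - f t)" and "k > 0"
    and dominated: "\<And>t. t \<ge> 0 \<Longrightarrow> (g t)^2 \<le> f t"
  shows "Limsup at_top (\<lambda>t. ereal \<bar>g t\<bar>) \<le> ereal (sqrt R)"
proof -
  define h where "h t = sqrt (R + exp (- (k * t)) * (f 0 - R))" for t
  have "eventually (\<lambda>t. ereal \<bar>g t\<bar> \<le> ereal (h t)) at_top"
    using eventually_ge_at_top[of 0]
  proof eventually_elim
    case (elim t)
    have "(g t)^2 \<le> R + exp (- (k * t)) * (f 0 - R)"
      using dominated[OF elim] differential_inequality_exp_bound[OF deriv ineq elim] by linarith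
    then have "sqrt ((g t)^2) \<le> h t"
      unfolding h_def by (rule real_sqrt_le_mono)
    then show ?case by simp
  qed
  then have "Limsup at_top (\<lambda>t. ereal \<bar>g t\<bar>) \<le> Limsup at_top (\<lambda>t. ereal (h t))"
    by (rule Limsup_mono)
  also have "\<dots> = ereal (sqrt R)"
  proof (intro lim_imp_Limsup)
    have "((\<lambda>t. exp (- (k * t))) \<longlongrightarrow> 0) at_top"
      using \<open>k > 0\<close> by real_asymp
    then have "(h \<longlongrightarrow> sqrt (R + 0 * (f 0 - R))) at_top"
      unfolding h_def by (intro tendsto_intros)
    then show "((\<lambda>t. ereal (h t)) \<longlongrightarrow> ereal (sqrt R)) at_top"
      by simp
  qed simp
  finally show ?thesis .
qed

lemma two_mul_le_scaled_sq_add_sq: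
  fixes x y k :: real
  assumes "k > 0"
  shows "2 * x * y \<le> k * x^2 + y^2 / k"
proof -
  have "0 \<le> (k * x - y)^2 / k"
    using assms by simp
  also have "\<dots> = k * x^2 + y^2 / k - 2 * x * y"
    using assms by (simp add: power2_diff field_simps power2_eq_square)
  finally show ?thesis by simp
qed

definition dirichlet_energy :: "nat \<Rightarrow> (nat \<Rightarrow> nat \<Rightarrow> real) \<Rightarrow> (nat \<Rightarrow> real) \<Rightarrow> real" where
  "dirichlet_energy N a x = (\<Sum>u<N. \<Sum>v<N. a u v * (x u - x v)^2)"

lemma edge_term_le_dirichlet_energy:
  assumes a_nonneg: "\<And>i j. i < N \<Longrightarrow> j < N \<Longrightarrow> a i j \<ge> 0" and "i < N" "j < N"
  shows "a i j * (x i - x j)^2 \<le> dirichlet_energy N a x"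
proof -
  have "a i j * (x i - x j)^2 \<le> (\<Sum>v<N. a i v * (x i - x v)^2)"
    by (rule member_le_sum[where f="\<lambda>v. a i v * (x i - x v)^2"]) (use assms in auto)
  also have "\<dots> \<le> dirichlet_energy N a x"
    unfolding dirichlet_energy_def
    by (rule member_le_sum[where f="\<lambda>u. \<Sum>v<N. a u v * (x u - x v)^2"])
      (use assms in \<open>auto intro!: sum_nonneg\<close>)
  finally show ?thesis .
qed

lemma sq_diff_le_dirichlet_energy_if_path:
  assumes a_nonneg: "\<And>i j. i < N \<Longrightarrow> j < N \<Longrightarrow> a i j \<ge> 0"
    and "(i, j) \<in> (graph_edges N a)\<^sup>*"
  shows "\<exists>K\<ge>0. \<forall>x. (x i - x j)^2 \<le> K * dirichlet_energy N a x"
  using \<open>(i, j) \<in> (graph_edges N a)\<^sup>*\<close>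
proof (induction rule: rtrancl_induct)
  case base
  show ?case by (intro exI[of _ 0]) auto
next
  case (step k j)
  then obtain K where "K \<ge> 0" and K: "\<And>x. (x i - x k)^2 \<le> K * dirichlet_energy N a x"
    by blast
  from step(2) have edge: "k < N" "j < N" "a k j > 0"
    by (auto simp: graph_edges_def)
  show ?case
  proof (intro exI[of _ "2 * K + 2 / a k j"] conjI allI)
    show "0 \<le> 2 * K + 2 / a k j"
      using \<open>K \<ge> 0\<close> edge by auto
    fix x :: "nat \<Rightarrow> real"
    have "(x k - x j)^2 \<le> dirichlet_energy N a x / a k j"
      using edge_term_le_dirichlet_energy[OF a_nonneg edge(1,2), where x = x] edge
      by (simp add: field_simps)
    moreover have "(x i - x j)^2 \<le> 2 * (x i - x k)^2 + 2 * (x k - x j)^2"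
      by (smt (verit) sum_squares_bound power2_diff power2_sum)
    ultimately show "(x i - x j)^2 \<le> (2 * K + 2 / a k j) * dirichlet_energy N a x"
      using K[of x] by (simp add: algebra_simps)
  qed
qed

lemma sum_sq_pairwise_diff:
  fixes x :: "nat \<Rightarrow> real"
  shows "(\<Sum>i<N. \<Sum>j<N. (x i - x j)^2) = 2 * real N * (\<Sum>i<N. (x i)^2) - 2 * (\<Sum>i<N. x i)^2"
proof -
  have "(\<Sum>i<N. \<Sum>j<N. (x i - x j)^2) = (\<Sum>i<N. \<Sum>j<N. (x i)^2 + (x j)^2 - 2 * x i * x j)"
    by (simp add: power2_diff)
  also have "\<dots> = (\<Sum>i<N. real N * (x i)^2 + (\<Sum>j<N. (x j)^2) - 2 * x i * (\<Sum>j<N. x j))"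
    by (simp add: sum.distrib sum_subtractf sum_distrib_left mult.assoc)
  also have "\<dots> = 2 * real N * (\<Sum>i<N. (x i)^2) - 2 * (\<Sum>i<N. x i)^2"
    by (simp add: sum.distrib sum_subtractf sum_distrib_left[symmetric]
        sum_distrib_right[symmetric] power2_eq_square algebra_simps)
  finally show ?thesis .
qed

lemma dirichlet_energy_eq_laplacian_form:
  assumes a_sym: "\<And>i j. i < N \<Longrightarrow> j < N \<Longrightarrow> a i j = a j i"
  shows "dirichlet_energy N a x = 2 * (\<Sum>i<N. x i * (\<Sum>j<N. a i j * (x i - x j)))"
proof -
  have form: "(\<Sum>i<N. x i * (\<Sum>j<N. a i j * (x i - x j))) = (\<Sum>u<N. \<Sum>v<N. a u v * x u * (x u - x v))"
    by (simp add: sum_distrib_left mult.assoc mult.left_commute)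
  also have "\<dots> = (\<Sum>v<N. \<Sum>u<N. a u v * x u * (x u - x v))"
    by (rule sum.swap)
  also have "\<dots> = (\<Sum>u<N. \<Sum>v<N. a u v * x v * (x v - x u))"
    by (intro sum.cong refl) (simp add: a_sym)
  finally have swapped: "(\<Sum>i<N. x i * (\<Sum>j<N. a i j * (x i - x j))) = \<dots>" .
  have "dirichlet_energy N a x
      = (\<Sum>u<N. \<Sum>v<N. a u v * x u * (x u - x v) + a u v * x v * (x v - x u))"
    unfolding dirichlet_energy_def
    by (intro sum.cong refl) (simp add: power2_eq_square algebra_simps)
  also have "\<dots> = (\<Sum>u<N. \<Sum>v<N. a u v * x u * (x u - x v)) + (\<Sum>u<N. \<Sum>v<N. a u v * x v * (x v - x u))"
    by (simp add: sum.distrib)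
  finally show ?thesis
    using form swapped by simp
qed

lemma laplacian_spectral_gap:
  assumes "0 < N"
    and a_sym: "\<And>i j. i < N \<Longrightarrow> j < N \<Longrightarrow> a i j = a j i"
    and a_nonneg: "\<And>i j. i < N \<Longrightarrow> j < N \<Longrightarrow> a i j \<ge> 0"
    and conn: "connected_graph N a"
  obtains l where "l > 0"
    and "\<And>x. (\<Sum>i<N. x i) = 0 \<Longrightarrow> l * (\<Sum>i<N. (x i)^2) \<le> (\<Sum>i<N. x i * (\<Sum>j<N. a i j * (x i - x j)))"
proof -
  have "\<forall>p\<in>{..<N} \<times> {..<N}. \<exists>K\<ge>0. \<forall>x. (x (fst p) - x (snd p))^2 \<le> K * dirichlet_energy N a x"
    using sq_diff_le_dirichlet_energy_if_path[OF a_nonneg] conn unfolding connected_graph_def by auto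
  then obtain K where K: "\<And>p. p \<in> {..<N} \<times> {..<N} \<Longrightarrow>
      K p \<ge> 0 \<and> (\<forall>x. (x (fst p) - x (snd p))^2 \<le> K p * dirichlet_energy N a x)"
    by metis
  \<comment> \<open>For \<open>\<Sum>x = 0\<close>, summing these bounds over all pairs gives \<open>2 N |x|\<^sup>2 \<le> Ksum \<cdot> 2 x\<^sup>T L x\<close>.\<close>
  define Ksum where "Ksum = (\<Sum>i<N. \<Sum>j<N. K (i, j))"
  have "Ksum \<ge> 0"
    unfolding Ksum_def using K by (auto intro!: sum_nonneg)
  show ?thesis
  proof
    show "real N / (Ksum + 1) > 0"
      using \<open>0 < N\<close> \<open>Ksum \<ge> 0\<close> by auto
    fix x :: "nat \<Rightarrow> real"
    assume "(\<Sum>i<N. x i) = 0"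
    define Lx where "Lx = (\<Sum>i<N. x i * (\<Sum>j<N. a i j * (x i - x j)))"
    have energy: "dirichlet_energy N a x = 2 * Lx"
      unfolding Lx_def by (rule dirichlet_energy_eq_laplacian_form[OF a_sym])
    have "dirichlet_energy N a x \<ge> 0"
      unfolding dirichlet_energy_def by (auto intro!: sum_nonneg mult_nonneg_nonneg a_nonneg)
    then have "Lx \<ge> 0"
      using energy by simp
    have "2 * real N * (\<Sum>i<N. (x i)^2) = (\<Sum>i<N. \<Sum>j<N. (x i - x j)^2)"
      using sum_sq_pairwise_diff[of x N] \<open>(\<Sum>i<N. x i) = 0\<close> by simp
    also have "\<dots> \<le> (\<Sum>i<N. \<Sum>j<N. K (i, j) * dirichlet_energy N a x)"
      using K by (intro sum_mono) fastforce
    also have "\<dots> = Ksum * (2 * Lx)"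
      unfolding Ksum_def energy by (simp add: sum_distrib_right)
    finally have "real N * (\<Sum>i<N. (x i)^2) \<le> (Ksum + 1) * Lx"
      using \<open>Lx \<ge> 0\<close> by (simp add: algebra_simps)
    then show "real N / (Ksum + 1) * (\<Sum>i<N. (x i)^2) \<le> Lx"
      using \<open>Ksum \<ge> 0\<close> by (simp add: field_simps)
  qed
qed

lemma sum_weighted_diffs_eq_0:
  assumes a_sym: "\<And>i j. i < N \<Longrightarrow> j < N \<Longrightarrow> a i j = a j i"
  shows "(\<Sum>i<N. \<Sum>j<N. a i j * (x i - x j)) = (0 :: real)"
proof -
  have "(\<Sum>i<N. \<Sum>j<N. a i j * x j) = (\<Sum>j<N. \<Sum>i<N. a i j * x j)"
    by (rule sum.swap)
  also have "\<dots> = (\<Sum>j<N. \<Sum>i<N. a j i * x j)"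
    by (intro sum.cong refl) (simp add: a_sym)
  finally show ?thesis
    by (simp add: sum_subtractf right_diff_distrib)
qed

lemma sum_nbrs_antisym_eq_0:
  fixes s :: "nat \<Rightarrow> nat \<Rightarrow> real"
  assumes a_sym: "\<And>i j. i < N \<Longrightarrow> j < N \<Longrightarrow> a i j = a j i"
  shows "(\<Sum>i<N. \<Sum>j\<in>nbrs N a i. s j i - s i j) = 0"
proof -
  define s0 where "s0 i j = (if a i j > 0 then s i j else 0)" for i j
  have nbrs: "(\<Sum>j\<in>nbrs N a i. s j i - s i j) = (\<Sum>j<N. s0 j i - s0 i j)" if "i < N" for i
  proof -
    have "nbrs N a i = {j \<in> {..<N}. a i j > 0}"
      unfolding nbrs_def by auto
    then have "(\<Sum>j\<in>nbrs N a i. s j i - s i j) = (\<Sum>j<N. if a i j > 0 then s j i - s i j else 0)"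
      by (simp only:) (rule sum.inter_filter, simp)
    also have "\<dots> = (\<Sum>j<N. s0 j i - s0 i j)"
      using that by (intro sum.cong refl) (auto simp: s0_def a_sym)
    finally show ?thesis .
  qed
  have "(\<Sum>i<N. \<Sum>j<N. s0 j i) = (\<Sum>i<N. \<Sum>j<N. s0 i j)"
    by (rule sum.swap)
  then show ?thesis
    using nbrs by (simp add: sum_subtractf)
qed

lemma sum_mask_eq_0:
  assumes "\<And>i j. i < N \<Longrightarrow> j < N \<Longrightarrow> a i j = a j i"
  shows "(\<Sum>i<N. mask N a Am \<omega> i t) = 0"
  unfolding mask_def by (rule sum_nbrs_antisym_eq_0[OF assms])

lemma mask_has_real_derivative:
  "(mask N a Am \<omega> i has_real_derivative
     (\<Sum>j\<in>nbrs N a i. Am * \<omega> j i * cos (\<omega> j i * t) - Am * \<omega> i j * cos (\<omega> i j * t))) (at t)"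
  unfolding mask_def[abs_def] sig_def
  by (auto intro!: derivative_eq_intros sum.cong)

lemma abs_deriv_mask_le:
  "\<bar>deriv (mask N a Am \<omega> i) t\<bar> \<le> (\<Sum>j\<in>nbrs N a i. \<bar>Am\<bar> * (\<bar>\<omega> j i\<bar> + \<bar>\<omega> i j\<bar>))"
proof -
  have term_le: "\<bar>Am * w * cos (w * t)\<bar> \<le> \<bar>Am\<bar> * \<bar>w\<bar>" for w
    by (simp add: abs_mult mult_left_le)
  have "\<bar>deriv (mask N a Am \<omega> i) t\<bar>
      \<le> (\<Sum>j\<in>nbrs N a i. \<bar>Am * \<omega> j i * cos (\<omega> j i * t) - Am * \<omega> i j * cos (\<omega> i j * t)\<bar>)"
    unfolding DERIV_imp_deriv[OF mask_has_real_derivative] by (rule sum_abs)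
  also have "\<dots> \<le> (\<Sum>j\<in>nbrs N a i. \<bar>Am\<bar> * (\<bar>\<omega> j i\<bar> + \<bar>\<omega> i j\<bar>))"
    by (intro sum_mono order_trans[OF abs_triangle_ineq4])
      (use term_le in \<open>simp add: distrib_left add_mono\<close>)
  finally show ?thesis .
qed

lemma consensus_preserves_sum:
  fixes x w w' :: "nat \<Rightarrow> real \<Rightarrow> real" and a :: "nat \<Rightarrow> nat \<Rightarrow> real"
  assumes a_sym: "\<And>i j. i < N \<Longrightarrow> j < N \<Longrightarrow> a i j = a j i"
    and w_deriv: "\<And>i t. i < N \<Longrightarrow> t \<ge> 0 \<Longrightarrow> (w i has_real_derivative w' i t) (at t within {0..})"
    and x_deriv: "\<And>i t. i < N \<Longrightarrow> t \<ge> 0 \<Longrightarrow>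
       (x i has_real_derivative w' i t - \<beta> * (\<Sum>j<N. a i j * (x i t - x j t))) (at t within {0..})"
    and init: "\<And>i. i < N \<Longrightarrow> x i 0 = w i 0" and "t \<ge> 0"
  shows "(\<Sum>i<N. x i t) = (\<Sum>i<N. w i t)"
proof -
  define d where "d t = (\<Sum>i<N. x i t - w i t)" for t
  have "(d has_real_derivative 0) (at s within {0..})" if "s \<ge> 0" for s
  proof -
    have "(d has_real_derivative (\<Sum>i<N. - \<beta> * (\<Sum>j<N. a i j * (x i s - x j s))))
        (at s within {0..})"
      unfolding d_def using that by (auto intro!: derivative_eq_intros x_deriv w_deriv)
    then show ?thesis
      by (simp add: sum_negf sum_distrib_left[symmetric] sum_weighted_diffs_eq_0[OF a_sym])
  qed
  then obtain c where "\<And>s. s \<in> {0..} \<Longrightarrow> d s = c"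
    using has_field_derivative_zero_constant[of "{0::real..}" d] by auto
  then have "d t = d 0"
    using \<open>t \<ge> 0\<close> by simp
  also have "d 0 = 0"
    unfolding d_def using init by simp
  finally show ?thesis
    unfolding d_def by (simp add: sum_subtractf)
qed

lemma consensus_error_Limsup_le:
  fixes e u :: "nat \<Rightarrow> real \<Rightarrow> real" and a :: "nat \<Rightarrow> nat \<Rightarrow> real" and b :: "nat \<Rightarrow> real"
  assumes gap: "\<And>x. (\<Sum>i<N. x i) = 0 \<Longrightarrow>
       l * (\<Sum>i<N. (x i)^2) \<le> (\<Sum>i<N. x i * (\<Sum>j<N. a i j * (x i - x j)))"
    and "l > 0" and "\<beta> > 0"
    and sum_eq_0: "\<And>t. t \<ge> 0 \<Longrightarrow> (\<Sum>k<N. e k t) = 0"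
    and e_deriv: "\<And>k t. k < N \<Longrightarrow> t \<ge> 0 \<Longrightarrow>
       (e k has_real_derivative u k t - \<beta> * (\<Sum>j<N. a k j * (e k t - e j t))) (at t within {0..})"
    and u_bound: "\<And>k t. k < N \<Longrightarrow> t \<ge> 0 \<Longrightarrow> \<bar>u k t\<bar> \<le> b k"
    and "i < N"
  shows "Limsup at_top (\<lambda>t. ereal \<bar>e i t\<bar>) \<le> ereal (sqrt (\<Sum>k<N. (b k)^2) / (l * \<beta>))"
proof -
  define \<kappa> where "\<kappa> = l * \<beta>"
  define U where "U = (\<Sum>k<N. (b k)^2)"
  define V where "V t = (\<Sum>k<N. (e k t)^2)" for t
  define Lap where "Lap k t = (\<Sum>j<N. a k j * (e k t - e j t))" for k t
  define V' where "V' t = (\<Sum>k<N. 2 * e k t * u k t) - 2 * \<beta> * (\<Sum>k<N. e k t * Lap k t)" for t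
  have "\<kappa> > 0"
    unfolding \<kappa>_def using \<open>l > 0\<close> \<open>\<beta> > 0\<close> by simp
  have V_deriv: "(V has_real_derivative V' t) (at t within {0..})" if "t \<ge> 0" for t
  proof -
    have "(V has_real_derivative (\<Sum>k<N. 2 * ((u k t - \<beta> * Lap k t) * e k t))) (at t within {0..})"
      unfolding V_def Lap_def using that by (auto intro!: derivative_eq_intros e_deriv)
    then show ?thesis
      unfolding V'_def by (simp add: algebra_simps sum_subtractf sum_distrib_left)
  qed
  have V'_le: "V' t \<le> \<kappa> * (U / \<kappa>^2 - V t)" if "t \<ge> 0" for t
  proof -
    have "(\<Sum>k<N. 2 * e k t * u k t) \<le> (\<Sum>k<N. \<kappa> * (e k t)^2 + (b k)^2 / \<kappa>)"
    proof (rule sum_mono)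
      fix k assume "k \<in> {..<N}"
      then have "(u k t)^2 \<le> (b k)^2"
        using u_bound[of k t] that by (simp add: abs_le_square_iff[symmetric])
      then show "2 * e k t * u k t \<le> \<kappa> * (e k t)^2 + (b k)^2 / \<kappa>"
        using two_mul_le_scaled_sq_add_sq[OF \<open>\<kappa> > 0\<close>, of "e k t" "u k t"] \<open>\<kappa> > 0\<close>
        by (smt (verit) divide_right_mono)
    qed
    also have "\<dots> = \<kappa> * V t + U / \<kappa>"
      unfolding V_def U_def by (simp add: sum.distrib sum_distrib_left sum_divide_distrib)
    finally have "(\<Sum>k<N. 2 * e k t * u k t) \<le> \<kappa> * V t + U / \<kappa>" .
    moreover have "\<kappa> * V t \<le> \<beta> * (\<Sum>k<N. e k t * Lap k t)"
      using gap[of "\<lambda>k. e k t"] sum_eq_0[OF that] \<open>\<beta> > 0\<close>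
      unfolding \<kappa>_def V_def Lap_def by (simp add: mult.assoc mult.left_commute)
    moreover have "\<kappa> * (U / \<kappa>^2 - V t) = U / \<kappa> - \<kappa> * V t"
      using \<open>\<kappa> > 0\<close> by (simp add: power2_eq_square field_simps)
    ultimately show ?thesis
      unfolding V'_def by linarith
  qed
  have "(e i t)^2 \<le> V t" for t
    unfolding V_def by (rule member_le_sum[where f = "\<lambda>k. (e k t)^2"]) (use \<open>i < N\<close> in auto)
  then have "Limsup at_top (\<lambda>t. ereal \<bar>e i t\<bar>) \<le> ereal (sqrt (U / \<kappa>^2))"
    using Limsup_abs_le_sqrt_of_differential_inequality[OF V_deriv V'_le \<open>\<kappa> > 0\<close>] by blast
  also have "sqrt (U / \<kappa>^2) = sqrt U / (l * \<beta>)"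
    using \<open>\<kappa> > 0\<close> unfolding \<kappa>_def by (simp add: real_sqrt_divide)
  finally show ?thesis
    unfolding U_def .
qed

lemma sum_masked_estimates_eq_sum:
  fixes zh z z' :: "nat \<Rightarrow> real \<Rightarrow> real" and a :: "nat \<Rightarrow> nat \<Rightarrow> real"
  assumes a_sym: "\<And>i j. i < N \<Longrightarrow> j < N \<Longrightarrow> a i j = a j i"
    and z_deriv: "\<And>i t. i < N \<Longrightarrow> t \<ge> 0 \<Longrightarrow> (z i has_real_derivative z' i t) (at t within {0..})"
    and zh_deriv: "\<And>i t. i < N \<Longrightarrow> t \<ge> 0 \<Longrightarrow> (zh i has_real_derivative z' i t
       + deriv (mask N a Am \<omega> i) t - \<beta> * (\<Sum>j<N. a i j * (zh i t - zh j t))) (at t within {0..})"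
    and init: "\<And>i. i < N \<Longrightarrow> zh i 0 = z i 0 + mask N a Am \<omega> i 0" and "t \<ge> 0"
  shows "(\<Sum>i<N. zh i t) = (\<Sum>i<N. z i t)"
proof -
  let ?m = "mask N a Am \<omega>"
  have m_deriv: "(?m i has_real_derivative deriv (?m i) t) (at t within {0..})" for i t
    using DERIV_imp_deriv[OF mask_has_real_derivative] mask_has_real_derivative
    by (metis has_field_derivative_at_within)
  have "(\<Sum>i<N. zh i t) = (\<Sum>i<N. z i t + ?m i t)"
  proof (rule consensus_preserves_sum[where a = a and \<beta> = \<beta>, OF a_sym _ zh_deriv _ \<open>t \<ge> 0\<close>])
    show "((\<lambda>t. z i t + ?m i t) has_real_derivative z' i t + deriv (?m i) t) (at t within {0..})"
      if "i < N" "t \<ge> 0" for i t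
      using that by (auto intro!: derivative_eq_intros z_deriv m_deriv)
  qed (use init in auto)
  then show ?thesis
    by (simp add: sum.distrib sum_mask_eq_0[OF a_sym])
qed

lemma abs_average_le:
  fixes f :: "nat \<Rightarrow> real"
  assumes "0 < N" and "\<And>j. j < N \<Longrightarrow> \<bar>f j\<bar> \<le> B"
  shows "\<bar>(\<Sum>j<N. f j) / real N\<bar> \<le> B"
proof -
  have "\<bar>\<Sum>j<N. f j\<bar> \<le> (\<Sum>j<N. \<bar>f j\<bar>)"
    by (rule sum_abs)
  also have "\<dots> \<le> real N * B"
    using assms(2) sum_mono[of "{..<N}" "\<lambda>j. \<bar>f j\<bar>" "\<lambda>_. B"] by simp
  finally show ?thesis
    using \<open>0 < N\<close> by (simp add: divide_le_eq mult.commute)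
qed

theorem theorem1:
  fixes N :: nat and a :: "nat \<Rightarrow> nat \<Rightarrow> real" and Am :: real
    and \<omega> :: "nat \<Rightarrow> nat \<Rightarrow> real"
    and z z' :: "nat \<Rightarrow> real \<Rightarrow> real"
  assumes N_pos: "0 < N"
    and a_sym: "\<And>i j. i < N \<Longrightarrow> j < N \<Longrightarrow> a i j = a j i"
    and a_nonneg: "\<And>i j. i < N \<Longrightarrow> j < N \<Longrightarrow> a i j \<ge> 0"
    and conn: "connected_graph N a"
    and Am_pos: "Am > 0"
    and z_deriv: "\<And>i t. i < N \<Longrightarrow> t \<ge> 0 \<Longrightarrow>
                    (z i has_real_derivative z' i t) (at t within {0..})"
    and z'_cont: "\<And>i. i < N \<Longrightarrow> continuous_on {0..} (z' i)"
    and z'_bdd: "\<exists>B. \<forall>i<N. \<forall>t\<ge>0. \<bar>z' i t\<bar> \<le> B"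
  shows "\<exists>c\<ge>0. \<forall>\<beta>>0. \<forall>zh :: nat \<Rightarrow> real \<Rightarrow> real.
           ((\<forall>i<N. zh i 0 = z i 0 + mask N a Am \<omega> i 0) \<and>
            (\<forall>i<N. \<forall>t\<ge>0. (zh i has_real_derivative
                (z' i t + deriv (mask N a Am \<omega> i) t
                 - \<beta> * (\<Sum>j<N. a i j * (zh i t - zh j t)))) (at t within {0..})))
           \<longrightarrow> (\<forall>i<N. Limsup at_top (\<lambda>t. ereal \<bar>zh i t - (\<Sum>j<N. z j t) / real N\<bar>)
                        \<le> ereal (c / \<beta>))"
proof -
  obtain l where "l > 0" and gap: "\<And>x. (\<Sum>i<N. x i) = 0 \<Longrightarrow>
      l * (\<Sum>i<N. (x i)^2) \<le> (\<Sum>i<N. x i * (\<Sum>j<N. a i j * (x i - x j)))"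
    using laplacian_spectral_gap[OF N_pos a_sym a_nonneg conn] by blast
  obtain B where B: "\<And>i t. i < N \<Longrightarrow> t \<ge> 0 \<Longrightarrow> \<bar>z' i t\<bar> \<le> B"
    using z'_bdd by blast
  define b where "b k = 2 * B + (\<Sum>j\<in>nbrs N a k. \<bar>Am\<bar> * (\<bar>\<omega> j k\<bar> + \<bar>\<omega> k j\<bar>))" for k
  show ?thesis
  proof (intro exI[of _ "sqrt (\<Sum>k<N. (b k)^2) / l"] conjI allI impI)
    show "0 \<le> sqrt (\<Sum>k<N. (b k)^2) / l"
      using \<open>l > 0\<close> by (simp add: sum_nonneg)
    fix \<beta> :: real and zh :: "nat \<Rightarrow> real \<Rightarrow> real" and i :: nat
    let ?m = "mask N a Am \<omega>"
    assume "\<beta> > 0" and "i < N" and zh: "(\<forall>i<N. zh i 0 = z i 0 + ?m i 0) \<and>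
      (\<forall>i<N. \<forall>t\<ge>0. (zh i has_real_derivative z' i t + deriv (?m i) t
         - \<beta> * (\<Sum>j<N. a i j * (zh i t - zh j t))) (at t within {0..}))"
    define e where "e k t = zh k t - (\<Sum>j<N. z j t) / real N" for k t
    have "(\<Sum>k<N. zh k t) = (\<Sum>k<N. z k t)" if "t \<ge> 0" for t
      by (rule sum_masked_estimates_eq_sum[where a = a and \<beta> = \<beta>, OF a_sym z_deriv])
        (use zh that in auto)
    then have "(\<Sum>k<N. e k t) = 0" if "t \<ge> 0" for t
      using that N_pos by (simp add: e_def sum_subtractf)
    moreover have "(e k has_real_derivative (z' k t + deriv (?m k) t - (\<Sum>j<N. z' j t) / real N)
        - \<beta> * (\<Sum>j<N. a k j * (e k t - e j t))) (at t within {0..})" if "k < N" "t \<ge> 0" for k t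
      unfolding e_def using zh that
      by (auto intro!: derivative_eq_intros z_deriv elim!: DERIV_cong simp: algebra_simps)
    moreover have "\<bar>z' k t + deriv (?m k) t - (\<Sum>j<N. z' j t) / real N\<bar> \<le> b k"
      if "k < N" "t \<ge> 0" for k t
      using abs_average_le[where f = "\<lambda>j. z' j t", OF N_pos B[OF _ \<open>t \<ge> 0\<close>]] B[OF that]
        abs_deriv_mask_le[of N a Am \<omega> k t]
      unfolding b_def by linarith
    ultimately have "Limsup at_top (\<lambda>t. ereal \<bar>e i t\<bar>) \<le> ereal (sqrt (\<Sum>k<N. (b k)^2) / (l * \<beta>))"
      by (intro consensus_error_Limsup_le[OF gap \<open>l > 0\<close> \<open>\<beta> > 0\<close> _ _ _ \<open>i < N\<close>])
    then show "Limsup at_top (\<lambda>t. ereal \<bar>zh i t - (\<Sum>j<N. z j t) / real N\<bar>)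
        \<le> ereal (sqrt (\<Sum>k<N. (b k)^2) / l / \<beta>)"
      by (simp add: e_def)
  qed
qed

end
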